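(* For every signature $\sigma$, the formula $\bigsqcup_{\mathcal F\in\mathbb F_\sigma}\Phi^{\mathcal F}$ is satisfied by every causal team over $\sigma$, i.e. $\models^c\bigsqcup_{\mathcal F\in\mathbb F_\sigma}\Phi^{\mathcal F}$.
   Context: A signature $\sigma=(\mathrm{Dom},\mathrm{Ran})$: $\mathrm{Dom}$ nonempty finite set of variables, each with nonempty finite range $\mathrm{Ran}(X)$; $\mathbf X=\mathbf x$ abbreviates $X_1=x_1\wedge\dots\wedge X_n=x_n$ ($\mathbf x\in\prod\mathrm{Ran}(X_i)$), inconsistent if it contains $X=x,X=x'$ with $x\ne x'$. $\mathcal{CO}[\sigma]$-formulas: $\alpha::=X=x\mid\neg\alpha\mid\alpha\wedge\alpha\mid\alpha\vee\alpha\mid\mathbf X=\mathbf x\;\Box\!\!\rightarrow\alpha$; $\alpha\supset\beta$ abbreviates $\neg\alpha\vee\beta$; $\sqcup$ is the global disjunction ($T\models\varphi\sqcup\psi$ iff $T\models\varphi$ or $T\models\psi$). A system of functions $\mathcal F$: for each $V\in\mathrm{En}(\mathcal F)\subseteq\mathrm{Dom}$ parents $PA^{\mathcal F}_V\subseteq\mathrm{Dom}\setminus\{V\}$ and $\mathcal F_V:\mathrm{Ran}(PA^{\mathcal F}_V)\to\mathrm{Ran}(V)$; $\mathrm{Ex}(\mathcal F)=\mathrm{Dom}\setminus\mathrm{En}(\mathcal F)$; only recursive systems (acyclic parent graph), forming the finite set $\mathbb F_\sigma$. An assignment $s$ is compatible with $\mathcal F$ if $s(V)=\mathcal F_V(s(PA^{\mathcal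 F}_V))$ for $V\in\mathrm{En}(\mathcal F)$. A causal team $T=(T^-,\mathcal F)$ consists of $\mathcal F\in\mathbb F_\sigma$ and a set $T^-$ of assignments compatible with $\mathcal F$ (all teams with empty team component identified as $\emptyset$); causal subteams are $(S^-,\mathcal F)$ with $S^-\subseteq T^-$. For consistent $\mathbf X=\mathbf x$: $\mathcal F_{\mathbf X=\mathbf x}$ restricts $\mathcal F$ to $\mathrm{En}(\mathcal F)\setminus\mathbf X$, $s^{\mathcal F}_{\mathbf X=\mathbf x}$: $X_i\mapsto x_i$, $V\mapsto s(V)$ on $\mathrm{Ex}(\mathcal F)\setminus\mathbf X$, $V\mapsto\mathcal F_V(s^{\mathcal F}_{\mathbf X=\mathbf x}(PA^{\mathcal F}_V))$ on $\mathrm{En}(\mathcal F)\setminus\mathbf X$; $T_{\mathbf X=\mathbf x}=(\{s^{\mathcal F}_{\mathbf X=\mathbf x}:s\in T^-\},\mathcal F_{\mathbf X=\mathbf x})$. $\models^c$: $T\models X=x$ iff $s(X)=x$ for all $s\in T^-$; $T\models\neg\alpha$ iff $(\{s\},\mathcal F)\not\models\alpha$ for all $s\in T^-$; $\wedge$ classical; $T\models\varphi\vee\psi$ iff there are causal subteams $T_1,T_2$ with $T_1^-\cup T_2^-=T^-$, $T_1\models\varphi$, $T_2\models\psi$; $T\models\mathbf X=\mathbf x\;\Box\!\!\rightarrow\varphi$ iff $\mathbf X=\mathbf x$ inconsistent or $T_{\mathbf X=\mathbf x}\models\varphi$. $\mathrm{Cn}(\mathcal F)=\{V\in\mathrm{En}(\mathcal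 F):\mathcal F_V\text{ constant}\}$. With $\mathbf W_V$ listing $\mathrm{Dom}\setminus\{V\}$: $\Phi^{\mathcal F}:=\bigwedge_{V\in\mathrm{En}(\mathcal F)\setminus\mathrm{Cn}(\mathcal F)}\eta(V)\wedge\bigwedge_{V\notin\mathrm{En}(\mathcal F)\setminus\mathrm{Cn}(\mathcal F)}\xi(V)$, where $\eta(V)$ is the conjunction of all $(\mathbf W=\mathbf w\wedge PA^{\mathcal F}_V=\mathbf p)\;\Box\!\!\rightarrow V=\mathcal F_V(\mathbf p)$ ($\mathbf W$ listing $\mathrm{Dom}\setminus(PA^{\mathcal F}_V\cup\{V\})$, $\mathbf w\in\mathrm{Ran}(\mathbf W)$, $\mathbf p\in\mathrm{Ran}(PA^{\mathcal F}_V)$) and $\xi(V)$ is the conjunction of all $V=v\supset(\mathbf W_V=\mathbf w\;\Box\!\!\rightarrow V=v)$ ($v\in\mathrm{Ran}(V)$, $\mathbf w\in\mathrm{Ran}(\mathbf W_V)$). *)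

theory Defs
  imports "HOL-Library.FuncSet"
begin

text \<open>A signature is given by a set of variables D (Dom) and a range function R (Ran).
  Variables have type 'v, values type 'a. Assignments are elements of PiE D R.\<close>

definition signature :: "'v set \<Rightarrow> ('v \<Rightarrow> 'a set) \<Rightarrow> bool" where
  "signature D R \<longleftrightarrow> finite D \<and> D \<noteq> {} \<and> (\<forall>X\<in>D. finite (R X) \<and> R X \<noteq> {})"

text \<open>A system of functions: endogenous variables, parent sets, and for each
  endogenous V a function F_V from Ran(PA_V) (assignments on PA_V) to Ran(V).\<close>

record ('v, 'a) sysf =
  En :: "'v set"
  PA :: "'v \<Rightarrow> 'v set"
  Fn :: "'v \<Rightarrow> ('v \<Rightarrow> 'a) \<Rightarrow> 'a"

definition parent_graph :: "('v, 'a) sysf \<Rightarrow> ('v \<times> 'v) set" where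
  "parent_graph F = {(P, V). V \<in> En F \<and> P \<in> PA F V}"

text \<open>Recursive systems of functions over the signature; these form the set \<open>\<bbbF>_\<sigma>\<close>.\<close>

definition is_sysf :: "'v set \<Rightarrow> ('v \<Rightarrow> 'a set) \<Rightarrow> ('v, 'a) sysf \<Rightarrow> bool" where
  "is_sysf D R F \<longleftrightarrow>
     En F \<subseteq> D \<and>
     (\<forall>V\<in>En F. PA F V \<subseteq> D - {V} \<and> Fn F V \<in> PiE (PiE (PA F V) R) (\<lambda>_. R V)) \<and>
     (\<forall>V. V \<notin> En F \<longrightarrow> PA F V = {} \<and> Fn F V = undefined) \<and>
     acyclic (parent_graph F)"

definition sysfs :: "'v set \<Rightarrow> ('v \<Rightarrow> 'a set) \<Rightarrow> ('v, 'a) sysf set" where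
  "sysfs D R = {F. is_sysf D R F}"

definition compatible :: "'v set \<Rightarrow> ('v \<Rightarrow> 'a set) \<Rightarrow> ('v, 'a) sysf \<Rightarrow> ('v \<Rightarrow> 'a) \<Rightarrow> bool" where
  "compatible D R F s \<longleftrightarrow> s \<in> PiE D R \<and> (\<forall>V\<in>En F. s V = Fn F V (restrict s (PA F V)))"

definition causal_team :: "'v set \<Rightarrow> ('v \<Rightarrow> 'a set) \<Rightarrow> ('v \<Rightarrow> 'a) set \<Rightarrow> ('v, 'a) sysf \<Rightarrow> bool" where
  "causal_team D R T F \<longleftrightarrow> F \<in> sysfs D R \<and> (\<forall>s\<in>T. compatible D R F s)"

datatype ('v, 'a) form =
    Eq 'v 'a
  | Neg "('v, 'a) form"
  | Conj "('v, 'a) form" "('v, 'a) form"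
  | Disj "('v, 'a) form" "('v, 'a) form"
  | Cf "('v \<times> 'a) list" "('v, 'a) form"   (* X = x  \<box>\<rightarrow> alpha *)

definition Imp :: "('v, 'a) form \<Rightarrow> ('v, 'a) form \<Rightarrow> ('v, 'a) form" where
  "Imp a b = Disj (Neg a) b"

definition consistent :: "('v \<times> 'a) list \<Rightarrow> bool" where
  "consistent xs \<longleftrightarrow> (\<forall>(X, x)\<in>set xs. \<forall>(Y, y)\<in>set xs. X = Y \<longrightarrow> x = y)"

definition do_sys :: "('v, 'a) sysf \<Rightarrow> 'v set \<Rightarrow> ('v, 'a) sysf" where
  "do_sys F X = F\<lparr>En := En F - X,
                  PA := (\<lambda>V. if V \<in> X then {} else PA F V),
                  Fn := (\<lambda>V. if V \<in> X then undefined else Fn F V)\<rparr>"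

text \<open>Intervened assignment s^F_{X=x}: the (for recursive F unique) assignment on D that
  sets X_i to x_i, keeps exogenous non-intervened variables, and computes the remaining
  endogenous variables by their functions.\<close>

definition do_assign :: "'v set \<Rightarrow> ('v, 'a) sysf \<Rightarrow> ('v \<times> 'a) list \<Rightarrow> ('v \<Rightarrow> 'a) \<Rightarrow> ('v \<Rightarrow> 'a)" where
  "do_assign D F xs s = (THE t. t \<in> extensional D \<and>
      (\<forall>(X, x)\<in>set xs. t X = x) \<and>
      (\<forall>V\<in>D - En F - fst ` set xs. t V = s V) \<and>
      (\<forall>V\<in>En F - fst ` set xs. t V = Fn F V (restrict t (PA F V))))"

text \<open>Causal-team semantics: sat D F T phi means (T, F) \<Turnstile>^c phi.\<close>

fun sat :: "'v set \<Rightarrow> ('v, 'a) sysf \<Rightarrow> ('v \<Rightarrow> 'a) set \<Rightarrow> ('v, 'a) form \<Rightarrow> bool" where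
  "sat D F T (Eq X x) \<longleftrightarrow> (\<forall>s\<in>T. s X = x)"
| "sat D F T (Neg a) \<longleftrightarrow> (\<forall>s\<in>T. \<not> sat D F {s} a)"
| "sat D F T (Conj a b) \<longleftrightarrow> sat D F T a \<and> sat D F T b"
| "sat D F T (Disj a b) \<longleftrightarrow>
     (\<exists>T1 T2. T1 \<subseteq> T \<and> T2 \<subseteq> T \<and> T1 \<union> T2 = T \<and> sat D F T1 a \<and> sat D F T2 b)"
| "sat D F T (Cf xs a) \<longleftrightarrow>
     (\<not> consistent xs \<or> sat D (do_sys F (fst ` set xs)) (do_assign D F xs ` T) a)"

fun bigconj :: "('v, 'a) form list \<Rightarrow> ('v, 'a) form" where
  "bigconj [] = undefined"
| "bigconj [a] = a"
| "bigconj (a # as) = Conj a (bigconj as)"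

definition Conjs :: "('v, 'a) form set \<Rightarrow> ('v, 'a) form" where
  "Conjs A = bigconj (SOME xs. set xs = A \<and> distinct xs)"

definition ante :: "'v set \<Rightarrow> ('v \<Rightarrow> 'a) \<Rightarrow> ('v \<times> 'a) list" where
  "ante W u = map (\<lambda>X. (X, u X)) (SOME xs. set xs = W \<and> distinct xs)"

definition Cn :: "'v set \<Rightarrow> ('v \<Rightarrow> 'a set) \<Rightarrow> ('v, 'a) sysf \<Rightarrow> 'v set" where
  "Cn D R F = {V\<in>En F. \<forall>p\<in>PiE (PA F V) R. \<forall>q\<in>PiE (PA F V) R. Fn F V p = Fn F V q}"

text \<open>eta(V): all (W = w \<and> PA_V = p) \<box>\<rightarrow> V = F_V(p); the antecedent assigns all of D - {V},
  so it is given by an assignment u on D - {V}, with p = u restricted to PA_V.\<close>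

definition eta :: "'v set \<Rightarrow> ('v \<Rightarrow> 'a set) \<Rightarrow> ('v, 'a) sysf \<Rightarrow> 'v \<Rightarrow> ('v, 'a) form" where
  "eta D R F V = Conjs {Cf (ante (D - {V}) u) (Eq V (Fn F V (restrict u (PA F V)))) | u.
                          u \<in> PiE (D - {V}) R}"

definition xi :: "'v set \<Rightarrow> ('v \<Rightarrow> 'a set) \<Rightarrow> 'v \<Rightarrow> ('v, 'a) form" where
  "xi D R V = Conjs {Imp (Eq V v) (Cf (ante (D - {V}) w) (Eq V v)) | v w.
                       v \<in> R V \<and> w \<in> PiE (D - {V}) R}"

definition Phi :: "'v set \<Rightarrow> ('v \<Rightarrow> 'a set) \<Rightarrow> ('v, 'a) sysf \<Rightarrow> ('v, 'a) form" where
  "Phi D R F = Conjs ({eta D R F V | V. V \<in> En F - Cn D R F} \<union>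
                     {xi D R V | V. V \<in> D - (En F - Cn D R F)})"

end

theory Submission
  imports Defs
begin

text \<open>The witness is the team's own system F. Every antecedent occurring in \<open>\<Phi>\<^sup>F\<close>
  intervenes on all variables except one, V; after such an intervention V equals
  \<open>F\<^sub>V(p)\<close> if V is endogenous, and keeps its value from s otherwise. This gives
  \<open>\<eta>(V)\<close> directly, and \<open>\<xi>(V)\<close> for exogenous V. For endogenous V with constant
  \<open>F\<^sub>V\<close>, compatibility of s makes \<open>F\<^sub>V(p) = s(V)\<close>, so \<open>\<xi>(V)\<close> holds as well.\<close>

lemma sat_bigconjI:
  "xs \<noteq> [] \<Longrightarrow> (\<And>a. a \<in> set xs \<Longrightarrow> sat D F T a) \<Longrightarrow> sat D F T (bigconj xs)"
  by (induction xs rule: bigconj.induct) auto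

lemma sat_ConjsI:
  assumes "finite A" "A \<noteq> {}" "\<And>a. a \<in> A \<Longrightarrow> sat D F T a"
  shows "sat D F T (Conjs A)"
proof -
  let ?xs = "SOME xs. set xs = A \<and> distinct xs"
  have "set ?xs = A"
    using someI_ex[OF finite_distinct_list[OF assms(1)]] by blast
  then show ?thesis
    unfolding Conjs_def using assms by (intro sat_bigconjI) auto
qed

lemma sat_Imp_EqI:
  assumes "sat D F {s \<in> T. s V = v} b"
  shows "sat D F T (Imp (Eq V v) b)"
proof -
  have "sat D F {s \<in> T. s V \<noteq> v} (Neg (Eq V v))" by simp
  with assms show ?thesis
    unfolding Imp_def sat.simps(4)
    by (intro exI[of _ "{s \<in> T. s V \<noteq> v}"] exI[of _ "{s \<in> T. s V = v}"]) auto
qed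

lemma set_ante:
  assumes "finite W"
  shows "set (ante W u) = (\<lambda>X. (X, u X)) ` W"
proof -
  let ?xs = "SOME xs. set xs = W \<and> distinct xs"
  have "set ?xs = W"
    using someI_ex[OF finite_distinct_list[OF assms]] by blast
  then show ?thesis unfolding ante_def by simp
qed

lemma consistent_ante: "finite W \<Longrightarrow> consistent (ante W u)"
  unfolding consistent_def by (auto simp: set_ante)

lemma sat_Cf_ante_Eq_iff:
  "finite W \<Longrightarrow>
    sat D F T (Cf (ante W u) (Eq V v)) \<longleftrightarrow> (\<forall>s\<in>T. do_assign D F (ante W u) s V = v)"
  by (simp add: consistent_ante)

lemma do_assign_ante_all_but_one:
  assumes "is_sysf D R F" "finite D" "V \<in> D"
  shows "do_assign D F (ante (D - {V}) u) s =
    (restrict u (D - {V}))(V := if V \<in> En F then Fn F V (restrict u (PA F V)) else s V)"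
    (is "_ = ?t")
proof -
  have En: "En F \<subseteq> D" and PA: "V \<in> En F \<Longrightarrow> PA F V \<subseteq> D - {V}"
    using assms(1) unfolding is_sysf_def by auto
  have graph: "set (ante (D - {V}) u) = (\<lambda>X. (X, u X)) ` (D - {V})"
    using assms(2) by (simp add: set_ante)
  then have vars: "fst ` set (ante (D - {V}) u) = D - {V}"
    by force
  have restrict_PA: "restrict t (PA F V) = restrict u (PA F V)"
    if "V \<in> En F" "\<forall>X\<in>D - {V}. t X = u X" for t
    using that PA by (intro restrict_ext) auto
  have exo: "D - En F - (D - {V}) = (if V \<in> En F then {} else {V})"
    and endo: "En F - (D - {V}) = (if V \<in> En F then {V} else {})"
    using En assms(3) by auto
  have conditions_iff: "
      (t \<in> extensional D \<and>
      (\<forall>(X, x)\<in>set (ante (D - {V}) u). t X = x) \<and>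
      (\<forall>W\<in>D - En F - fst ` set (ante (D - {V}) u). t W = s W) \<and>
      (\<forall>W\<in>En F - fst ` set (ante (D - {V}) u). t W = Fn F W (restrict t (PA F W))))
    \<longleftrightarrow> t \<in> extensional D \<and> (\<forall>X\<in>D - {V}. t X = u X) \<and>
        t V = (if V \<in> En F then Fn F V (restrict u (PA F V)) else s V)" for t
    unfolding vars unfolding exo endo graph using restrict_PA[of t] by auto
  have unique: "t = ?t" if "t \<in> extensional D" "\<forall>X\<in>D - {V}. t X = u X"
      "t V = (if V \<in> En F then Fn F V (restrict u (PA F V)) else s V)" for t
  proof
    fix Y show "t Y = ?t Y"
      using that assms(3) by (cases "Y \<in> D") (auto simp: extensional_def)
  qed
  show ?thesis
    unfolding do_assign_def conditions_iff
  proof (rule the_equality)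
    show "?t \<in> extensional D \<and> (\<forall>X\<in>D - {V}. ?t X = u X) \<and>
        ?t V = (if V \<in> En F then Fn F V (restrict u (PA F V)) else s V)"
      using assms(3) by (auto simp: extensional_def)
  qed (use unique in blast)
qed

lemma do_assign_ante_all_but_one_at:
  assumes "is_sysf D R F" "finite D" "V \<in> D"
  shows "do_assign D F (ante (D - {V}) u) s V =
    (if V \<in> En F then Fn F V (restrict u (PA F V)) else s V)"
  using do_assign_ante_all_but_one[OF assms] by simp

lemma do_assign_ante_all_but_one_keeps_value:
  assumes "is_sysf D R F" "finite D" "V \<in> D" "V \<notin> En F - Cn D R F"
    and "compatible D R F s" "u \<in> PiE (D - {V}) R"
  shows "do_assign D F (ante (D - {V}) u) s V = s V"
proof (cases "V \<in> En F")
  case True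
  with assms(4) have Cn: "V \<in> Cn D R F" by blast
  from assms(1) True have PA: "PA F V \<subseteq> D - {V}"
    unfolding is_sysf_def by blast
  from assms(5) True have "s \<in> PiE D R" "s V = Fn F V (restrict s (PA F V))"
    unfolding compatible_def by auto
  moreover have "restrict u (PA F V) \<in> PiE (PA F V) R"
    using assms(6) PA by (auto simp: PiE_def Pi_def)
  moreover have "restrict s (PA F V) \<in> PiE (PA F V) R"
    using \<open>s \<in> PiE D R\<close> PA by (auto simp: PiE_def Pi_def)
  ultimately show ?thesis
    using Cn do_assign_ante_all_but_one_at[OF assms(1-3)] True
    unfolding Cn_def by auto
qed (simp add: do_assign_ante_all_but_one_at[OF assms(1-3)])

lemma finite_nonempty_PiE_all_but_one:
  assumes "signature D R"
  shows "finite (PiE (D - {V}) R)" "PiE (D - {V}) R \<noteq> {}"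
  using assms unfolding signature_def by (auto intro: finite_PiE simp: PiE_eq_empty_iff)

lemma sat_eta_self:
  assumes "signature D R" "causal_team D R T F" "V \<in> En F"
  shows "sat D F T (eta D R F V)"
proof -
  have F: "is_sysf D R F" and fin: "finite D" and "V \<in> D"
    using assms unfolding causal_team_def sysfs_def signature_def is_sysf_def by auto
  have "sat D F T (Cf (ante (D - {V}) u) (Eq V (Fn F V (restrict u (PA F V)))))" for u
    using do_assign_ante_all_but_one_at[OF F fin \<open>V \<in> D\<close>] assms(3) fin
    by (simp add: sat_Cf_ante_Eq_iff)
  then show ?thesis
    unfolding eta_def using finite_nonempty_PiE_all_but_one[OF assms(1)]
    by (intro sat_ConjsI) (auto simp: setcompr_eq_image)
qed

lemma sat_xi_self:
  assumes "signature D R" "causal_team D R T F" "V \<in> D" "V \<notin> En F - Cn D R F"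
  shows "sat D F T (xi D R V)"
proof -
  have F: "is_sysf D R F" and fin: "finite D" and R: "finite (R V)" "R V \<noteq> {}"
    and compatible: "\<And>s. s \<in> T \<Longrightarrow> compatible D R F s"
    using assms unfolding causal_team_def sysfs_def signature_def by auto
  let ?A = "{Imp (Eq V v) (Cf (ante (D - {V}) w) (Eq V v)) | v w.
              v \<in> R V \<and> w \<in> PiE (D - {V}) R}"
  have "?A = (\<lambda>(v, w). Imp (Eq V v) (Cf (ante (D - {V}) w) (Eq V v))) ` (R V \<times> PiE (D - {V}) R)"
    by auto
  then have "finite ?A" "?A \<noteq> {}"
    using finite_nonempty_PiE_all_but_one[OF assms(1)] R by auto
  moreover have "sat D F T (Imp (Eq V v) (Cf (ante (D - {V}) w) (Eq V v)))"
    if "w \<in> PiE (D - {V}) R" for v w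
    using do_assign_ante_all_but_one_keeps_value[OF F fin assms(3,4) compatible that] fin
    by (intro sat_Imp_EqI) (simp add: sat_Cf_ante_Eq_iff)
  ultimately show ?thesis
    unfolding xi_def by (intro sat_ConjsI) auto
qed

lemma sat_Phi_self:
  assumes "signature D R" "causal_team D R T F"
  shows "sat D F T (Phi D R F)"
proof -
  let ?N = "En F - Cn D R F"
  have "finite D" "D \<noteq> {}" "?N \<subseteq> D"
    using assms unfolding causal_team_def sysfs_def is_sysf_def signature_def by auto
  then have "finite ?N"
    using finite_subset by blast
  have conjuncts: "{eta D R F V | V. V \<in> ?N} \<union> {xi D R V | V. V \<in> D - ?N} =
      eta D R F ` ?N \<union> xi D R ` (D - ?N)"
    by blast
  show ?thesis
    unfolding Phi_def conjuncts
  proof (rule sat_ConjsI)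
    show "finite (eta D R F ` ?N \<union> xi D R ` (D - ?N))"
      using \<open>finite D\<close> \<open>finite ?N\<close> by simp
    show "eta D R F ` ?N \<union> xi D R ` (D - ?N) \<noteq> {}"
      using \<open>D \<noteq> {}\<close> by blast
  qed (auto intro: sat_eta_self[OF assms] sat_xi_self[OF assms])
qed

theorem corollary3p6:
  fixes D :: "'v set" and R :: "'v \<Rightarrow> 'a set"
  assumes "signature D R"
  shows "\<forall>T F. causal_team D R T F \<longrightarrow> (\<exists>G\<in>sysfs D R. sat D F T (Phi D R G))"
  using sat_Phi_self[OF assms] unfolding causal_team_def by blast

end
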